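(* Let $n,t$ be integers with $4\leq t\leq \frac{n+2}{2}$, and let $T_n^*$ be any tree of the form described below with these $n,t$. Then $\kappa^1(T_n^* )=n-t$.
   Context: For a connected graph $G=(V,E)$: a set $F\subseteq V$ is a $1$-good-neighbor faulty set if every vertex of $V-F$ has at least one neighbor in $V-F$; a $1$-good-neighbor cut is such an $F$ with $G-F$ disconnected; $\kappa^1(G)$ is the minimum cardinality of a $1$-good-neighbor cut. The tree $T_n^*$: let $K_{1,n-t-1}$ be a star with center $v$ and leaves $u_1,\dots,u_{n-t-1}$; let $r\ge 2$ and $a_1,\dots,a_r\ge 2$ be integers with $\sum_{i=1}^r a_i=t$, and let $K_{1,a_1-1},\dots,K_{1,a_r-1}$ be pairwise disjoint stars (disjoint from the first) with centers $w_1,\dots,w_r$; $T_n^*$ is the tree of order $n$ obtained by adding the edges $vw_1,\dots,vw_r$. *)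

theory Defs
  imports Main
begin

text \<open>A (simple, undirected) graph is given by a vertex set V and a symmetric
adjacency relation E on V.\<close>

definition connected_set :: "('a \<Rightarrow> 'a \<Rightarrow> bool) \<Rightarrow> 'a set \<Rightarrow> bool" where
  "connected_set E S \<longleftrightarrow>
     (\<forall>x\<in>S. \<forall>y\<in>S. (\<lambda>u w. u \<in> S \<and> w \<in> S \<and> E u w)\<^sup>*\<^sup>* x y)"

definition disconnected_after :: "'a set \<Rightarrow> ('a \<Rightarrow> 'a \<Rightarrow> bool) \<Rightarrow> 'a set \<Rightarrow> bool" where
  "disconnected_after V E F \<longleftrightarrow> \<not> connected_set E (V - F) \<and> V - F \<noteq> {}"

definition good_neighbor1_faulty :: "'a set \<Rightarrow> ('a \<Rightarrow> 'a \<Rightarrow> bool) \<Rightarrow> 'a set \<Rightarrow> bool" where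
  "good_neighbor1_faulty V E F \<longleftrightarrow>
     F \<subseteq> V \<and> (\<forall>x\<in>V - F. \<exists>y\<in>V - F. E x y)"

definition good_neighbor1_cut :: "'a set \<Rightarrow> ('a \<Rightarrow> 'a \<Rightarrow> bool) \<Rightarrow> 'a set \<Rightarrow> bool" where
  "good_neighbor1_cut V E F \<longleftrightarrow>
     good_neighbor1_faulty V E F \<and> disconnected_after V E F"

definition kappa1 :: "'a set \<Rightarrow> ('a \<Rightarrow> 'a \<Rightarrow> bool) \<Rightarrow> nat" where
  "kappa1 V E = (LEAST k. \<exists>F. good_neighbor1_cut V E F \<and> card F = k)"

text \<open>The tree T_n^*. Vertices: centre v, leaves u_1..u_{n-t-1} of v,
centres w_1..w_r, and leaves Lv i j (j = 1..a_i - 1) of w_i.\<close>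
datatype tvert = Cv | Uv nat | Wv nat | Lv nat nat

definition tstar_V :: "nat \<Rightarrow> nat \<Rightarrow> nat \<Rightarrow> (nat \<Rightarrow> nat) \<Rightarrow> tvert set" where
  "tstar_V n t r a = {Cv} \<union> Uv ` {1..n - t - 1} \<union> Wv ` {1..r}
     \<union> {Lv i j | i j. i \<in> {1..r} \<and> j \<in> {1..a i - 1}}"

definition tstar_edge0 :: "nat \<Rightarrow> nat \<Rightarrow> nat \<Rightarrow> (nat \<Rightarrow> nat) \<Rightarrow> tvert \<Rightarrow> tvert \<Rightarrow> bool" where
  "tstar_edge0 n t r a x y \<longleftrightarrow>
     (x = Cv \<and> (\<exists>k\<in>{1..n - t - 1}. y = Uv k)) \<or>
     (x = Cv \<and> (\<exists>i\<in>{1..r}. y = Wv i)) \<or>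
     (\<exists>i\<in>{1..r}. \<exists>j\<in>{1..a i - 1}. x = Wv i \<and> y = Lv i j)"

definition tstar_E :: "nat \<Rightarrow> nat \<Rightarrow> nat \<Rightarrow> (nat \<Rightarrow> nat) \<Rightarrow> tvert \<Rightarrow> tvert \<Rightarrow> bool" where
  "tstar_E n t r a x y \<longleftrightarrow> tstar_edge0 n t r a x y \<or> tstar_edge0 n t r a y x"

end

theory Submission
  imports Defs
begin

text \<open>Removing the centre v together with its pendant leaves u_k leaves the r stars
K_{1,a_i-1}, each with at least two vertices; this is a 1-good-neighbor cut of size n - t.
Conversely, if v survives a 1-good-neighbor cut F, every surviving vertex reaches v (a
surviving leaf of w_i needs its only neighbour w_i), so G - F stays connected. Hence
v \<in> F, and then every u_k, whose only neighbour is v, lies in F as well.\<close>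

lemma kappa1_eqI:
  assumes "good_neighbor1_cut V E F" and "card F = k"
    and "\<And>F'. good_neighbor1_cut V E F' \<Longrightarrow> k \<le> card F'"
  shows "kappa1 V E = k"
  unfolding kappa1_def using assms by (intro Least_equality) auto

lemma connected_set_if_all_reach:
  assumes sym: "\<And>x y. E x y \<Longrightarrow> E y x"
    and reach: "\<And>x. x \<in> S \<Longrightarrow> (\<lambda>u w. u \<in> S \<and> w \<in> S \<and> E u w)\<^sup>*\<^sup>* x c"
  shows "connected_set E S"
  unfolding connected_set_def
proof (intro ballI)
  let ?R = "\<lambda>u w. u \<in> S \<and> w \<in> S \<and> E u w"
  fix x y assume "x \<in> S" "y \<in> S"
  have "symp ?R" using sym by (auto intro: sympI)
  then have "?R\<^sup>*\<^sup>* c y" using reach[OF \<open>y \<in> S\<close>] by (meson symp_rtranclp sympD)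
  with reach[OF \<open>x \<in> S\<close>] show "?R\<^sup>*\<^sup>* x y" by (rule rtranclp_trans)
qed

lemma not_connected_set_if_closed:
  assumes "x \<in> S" "y \<in> S" "x \<in> C" "y \<notin> C"
    and closed: "\<And>u w. u \<in> C \<Longrightarrow> u \<in> S \<Longrightarrow> w \<in> S \<Longrightarrow> E u w \<Longrightarrow> w \<in> C"
  shows "\<not> connected_set E S"
proof
  assume "connected_set E S"
  then have "(\<lambda>u w. u \<in> S \<and> w \<in> S \<and> E u w)\<^sup>*\<^sup>* x y"
    using assms(1,2) unfolding connected_set_def by blast
  then have "y \<in> C" by (induction rule: rtranclp_induct) (use \<open>x \<in> C\<close> closed in auto)
  with \<open>y \<notin> C\<close> show False by contradiction
qed

lemma pendant_in_good_neighbor1_faulty: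
  assumes "good_neighbor1_faulty V E F" "x \<in> V" "c \<in> F"
    and "\<And>y. E x y \<Longrightarrow> y = c"
  shows "x \<in> F"
  using assms unfolding good_neighbor1_faulty_def by blast

lemma finite_tstar_V: "finite (tstar_V n t r a)"
proof -
  have "{Lv i j | i j. i \<in> {1..r} \<and> j \<in> {1..a i - 1}}
      = (\<lambda>(i, j). Lv i j) ` (SIGMA i:{1..r}. {1..a i - 1})"
    by auto
  then show ?thesis unfolding tstar_V_def by simp
qed

definition tstar_centre_star :: "nat \<Rightarrow> nat \<Rightarrow> tvert set" where
  "tstar_centre_star n t = {Cv} \<union> Uv ` {1..n - t - 1}"

lemma card_tstar_centre_star:
  assumes "t < n"
  shows "card (tstar_centre_star n t) = n - t"
proof -
  have "card (Uv ` {1..n - t - 1}) = n - t - 1" by (simp add: card_image inj_on_def)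
  moreover have "Cv \<notin> Uv ` {1..n - t - 1}" by auto
  ultimately show ?thesis unfolding tstar_centre_star_def using assms by simp
qed

lemma good_neighbor1_cut_tstar_centre_star:
  assumes "r \<ge> 2" and "\<forall>i\<in>{1..r}. a i \<ge> 2"
  shows "good_neighbor1_cut (tstar_V n t r a) (tstar_E n t r a) (tstar_centre_star n t)"
proof -
  let ?V = "tstar_V n t r a" and ?E = "tstar_E n t r a" and ?F = "tstar_centre_star n t"
  have good_neighbour: "\<exists>y\<in>?V - ?F. ?E x y" if x: "x \<in> ?V - ?F" for x
  proof -
    from x consider (W) i where "i \<in> {1..r}" "x = Wv i"
      | (L) i j where "i \<in> {1..r}" "j \<in> {1..a i - 1}" "x = Lv i j"
      unfolding tstar_V_def tstar_centre_star_def by auto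
    then show ?thesis
    proof cases
      case W
      with assms(2) have "a i \<ge> 2" by blast
      with W have "Lv i 1 \<in> ?V - ?F" "?E x (Lv i 1)"
        unfolding tstar_V_def tstar_centre_star_def tstar_E_def tstar_edge0_def by auto
      then show ?thesis by blast
    next
      case L
      then have "Wv i \<in> ?V - ?F" "?E x (Wv i)"
        unfolding tstar_V_def tstar_centre_star_def tstar_E_def tstar_edge0_def by auto
      then show ?thesis by blast
    qed
  qed
  have W1: "Wv 1 \<in> ?V - ?F" and W2: "Wv 2 \<in> ?V - ?F"
    using assms(1) unfolding tstar_V_def tstar_centre_star_def by auto
  have "\<not> connected_set ?E (?V - ?F)"
    by (rule not_connected_set_if_closed[OF W1 W2, where C = "insert (Wv 1) (range (Lv 1))"])
      (auto simp: tstar_E_def tstar_edge0_def tstar_centre_star_def)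
  moreover have "?F \<subseteq> ?V" unfolding tstar_centre_star_def tstar_V_def by auto
  ultimately show ?thesis
    using W1 good_neighbour
    unfolding good_neighbor1_cut_def good_neighbor1_faulty_def disconnected_after_def by blast
qed

lemma centre_in_tstar_cut:
  assumes cut: "good_neighbor1_cut (tstar_V n t r a) (tstar_E n t r a) F"
  shows "Cv \<in> F"
proof (rule ccontr)
  let ?V = "tstar_V n t r a" and ?E = "tstar_E n t r a"
  let ?R = "\<lambda>u w. u \<in> ?V - F \<and> w \<in> ?V - F \<and> ?E u w"
  assume "Cv \<notin> F"
  then have Cv: "Cv \<in> ?V - F" unfolding tstar_V_def by auto
  have gn: "\<forall>x\<in>?V - F. \<exists>y\<in>?V - F. ?E x y"
    using cut unfolding good_neighbor1_cut_def good_neighbor1_faulty_def by blast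
  have "?R\<^sup>*\<^sup>* x Cv" if x: "x \<in> ?V - F" for x
  proof (cases x)
    case Cv
    then show ?thesis by simp
  next
    case (Uv k)
    with x Cv have "?R x Cv" unfolding tstar_V_def tstar_E_def tstar_edge0_def by auto
    then show ?thesis by (rule r_into_rtranclp)
  next
    case (Wv i)
    with x Cv have "?R x Cv" unfolding tstar_V_def tstar_E_def tstar_edge0_def by auto
    then show ?thesis by (rule r_into_rtranclp)
  next
    case (Lv i j)
    from gn x obtain y where y: "y \<in> ?V - F" "?E x y" by blast
    then have "y = Wv i" using Lv unfolding tstar_E_def tstar_edge0_def by auto
    with x y Cv have leaf_edge: "?R x (Wv i)" and centre_edge: "?R (Wv i) Cv"
      unfolding tstar_V_def tstar_E_def tstar_edge0_def by auto
    show ?thesis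
      using converse_rtranclp_into_rtranclp[where r = ?R, OF leaf_edge r_into_rtranclp[where r = ?R, OF centre_edge]] .
  qed
  then have "connected_set ?E (?V - F)"
    by (intro connected_set_if_all_reach[where c = Cv]) (auto simp: tstar_E_def)
  with cut show False unfolding good_neighbor1_cut_def disconnected_after_def by blast
qed

lemma tstar_centre_star_subset_cut:
  assumes cut: "good_neighbor1_cut (tstar_V n t r a) (tstar_E n t r a) F"
  shows "tstar_centre_star n t \<subseteq> F"
proof -
  have faulty: "good_neighbor1_faulty (tstar_V n t r a) (tstar_E n t r a) F"
    using cut unfolding good_neighbor1_cut_def by blast
  have "Uv k \<in> F" if "k \<in> {1..n - t - 1}" for k
    using that
    by (intro pendant_in_good_neighbor1_faulty[OF faulty _ centre_in_tstar_cut[OF cut]])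
      (auto simp: tstar_V_def tstar_E_def tstar_edge0_def)
  with centre_in_tstar_cut[OF cut] show ?thesis unfolding tstar_centre_star_def by blast
qed

theorem lemma3p1:
  fixes n t r :: nat and a :: "nat \<Rightarrow> nat"
  assumes "4 \<le> t" and "2 * t \<le> n + 2"
    and "r \<ge> 2" and "\<forall>i\<in>{1..r}. a i \<ge> 2" and "(\<Sum>i=1..r. a i) = t"
  shows "kappa1 (tstar_V n t r a) (tstar_E n t r a) = n - t"
proof (rule kappa1_eqI)
  show "good_neighbor1_cut (tstar_V n t r a) (tstar_E n t r a) (tstar_centre_star n t)"
    using assms(3,4) by (rule good_neighbor1_cut_tstar_centre_star)
  show "card (tstar_centre_star n t) = n - t"
    using assms(1,2) by (intro card_tstar_centre_star) simp
next
  fix F assume cut: "good_neighbor1_cut (tstar_V n t r a) (tstar_E n t r a) F"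
  then have "finite F"
    using finite_tstar_V finite_subset
    unfolding good_neighbor1_cut_def good_neighbor1_faulty_def by blast
  then have "card (tstar_centre_star n t) \<le> card F"
    by (intro card_mono tstar_centre_star_subset_cut[OF cut])
  then show "n - t \<le> card F" using assms(1,2) card_tstar_centre_star[of t n] by simp
qed

end
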